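(* Take the special vertex $v=0$. Let $I,J$ be $m$-subsets of $\{1,\dots,n\}$ such that $J\setminus I=J'\sqcup J''$ with $J'<(I\setminus J)<J''$. Then $\kappa(M_I,M_J)=|J'|$ and $\kappa(M_J,M_I)=|J''|$.
   Context: Fix integers $1\le m<n$. Let $Q$ be the quiver with vertex set $\mathbb{Z}_n$ and arrows $x_a\colon a-1\to a$, $y_a\colon a\to a-1$ for $a\in\{1,\dots,n\}$. Let $A$ be the quotient of $\widehat{\mathbb{C}Q}$ by the relations $xy=yx$ and $x^m=y^{n-m}$ at every vertex; centre $Z=\mathbb{C}[[t]]$, $t=xy$; $e_j$ the idempotent at vertex $j$. $\operatorname{CM}(A)$ is the category of finitely generated $A$-modules free over $Z$. For an $m$-subset $I\subseteq\{1,\dots,n\}$, $M_I\in\operatorname{CM}(A)$ is the module with $e_jM_I=Z$ for all $j$, where $x_a$ acts by $1$ if $a\in I$ and by $t$ if $a\notin I$, and $y_a$ acts by $t$ if $a\in I$ and by $1$ if $a\notin I$. For $M,N\in\operatorname{CM}(A)$, $K_v(M,N)$ is the cokernel of the injective restriction map $\operatorname{Hom}_A(M,N)\to\operatorname{Hom}_Z(e_vM,e_vN)$ and $\kappa(M,N)=\dim_{\mathbb{C}}K_v(M,N)$. For sets $X,Y$ of integers, $X<Y$ means $x<y$ for all $x\in X,y\in Y$. *)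

theory Defs
  imports "HOL-Computational_Algebra.Formal_Power_Series"
begin

text \<open>The centre Z = C[[t]] is modelled by the type complex fps, with t = fps_X.
Vertices of the cyclic quiver are 0,...,n-1 (vertex n is identified with 0);
for a in {1..n} the arrow x_a goes from vertex a-1 to vertex (a mod n) and
y_a goes back.\<close>

definition tgt :: "nat \<Rightarrow> nat \<Rightarrow> nat" where
  "tgt n a = a mod n"

definition src :: "nat \<Rightarrow> nat \<Rightarrow> nat" where
  "src n a = a - 1"

text \<open>Action of x_a and y_a on the module M_I (each e_j M_I = Z): multiplication
by the following power series.\<close>

definition xact :: "nat set \<Rightarrow> nat \<Rightarrow> complex fps" where
  "xact I a = (if a \<in> I then 1 else fps_X)"

definition yact :: "nat set \<Rightarrow> nat \<Rightarrow> complex fps" where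
  "yact I a = (if a \<in> I then fps_X else 1)"

text \<open>Z-linear maps Z \<rightarrow> Z, i.e. Hom_Z(e_v M, e_v N) for rank-one vertex modules.\<close>

definition Zlin :: "(complex fps \<Rightarrow> complex fps) set" where
  "Zlin = {h. (\<forall>r s. h (r + s) = h r + h s) \<and> (\<forall>a r. h (a * r) = a * h r)}"

definition HomA :: "nat \<Rightarrow> nat set \<Rightarrow> nat set \<Rightarrow> (nat \<Rightarrow> complex fps \<Rightarrow> complex fps) set" where
  "HomA n I J = {h. (\<forall>j<n. h j \<in> Zlin) \<and>
     (\<forall>a\<in>{1..n}. \<forall>r.
        h (tgt n a) (xact I a * r) = xact J a * h (src n a) r \<and>
        h (src n a) (yact I a * r) = yact J a * h (tgt n a) r)}"

text \<open>Dimension over C of the quotient V/W of C-vector spaces of maps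
(scalar c acting by multiplication with fps_const c): the least size of a finite
subset of V spanning V modulo W.\<close>

definition coker_dim :: "('b \<Rightarrow> complex fps) set \<Rightarrow> ('b \<Rightarrow> complex fps) set \<Rightarrow> nat" where
  "coker_dim V W = (LEAST d. \<exists>B. B \<subseteq> V \<and> finite B \<and> card B = d \<and>
      (\<forall>h\<in>V. \<exists>w\<in>W. \<exists>c :: ('b \<Rightarrow> complex fps) \<Rightarrow> complex.
          h = (\<lambda>r. w r + (\<Sum>b\<in>B. fps_const (c b) * b r))))"

text \<open>kappa(M_I, M_J) at the special vertex v = 0: dimension of the cokernel of the
restriction Hom_A(M_I,M_J) \<rightarrow> Hom_Z(e_0 M_I, e_0 M_J), h \<mapsto> h 0.\<close>

definition kappa0 :: "nat \<Rightarrow> nat set \<Rightarrow> nat set \<Rightarrow> nat" where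
  "kappa0 n I J = coker_dim Zlin ((\<lambda>h. h 0) ` HomA n I J)"

end

theory Submission
  imports Defs
begin

text \<open>A homomorphism \<open>M\<^sub>I \<rightarrow> M\<^sub>J\<close> is multiplication by some \<open>c\<^sub>j \<in> Z\<close> at every vertex, and the two
relations of the arrow \<open>a\<close> reduce to \<open>c\<^sub>a t\<^sup>[a \<in> J - I] = c\<^sub>a\<^sub>-\<^sub>1 t\<^sup>[a \<in> I - J]\<close>. Going once round the
cycle gives \<open>c\<^sub>0 t\<^sup>|(I - J) \<inter> [1,a]| = c\<^sub>a t\<^sup>|(J - I) \<inter> [1,a]|\<close>, and conversely every family of
this shape is a homomorphism. Hence the restriction to vertex 0 has image \<open>t\<^sup>d Z\<close>, where
\<open>d\<close> is the largest excess of \<open>|(J - I) \<inter> [1,a]|\<close> over \<open>|(I - J) \<inter> [1,a]|\<close>, and the cokernel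
\<open>Z/t\<^sup>d Z\<close> has dimension \<open>d\<close>. When \<open>J' < I - J < J''\<close> this excess is \<open>|J'|\<close>, attained just
before \<open>I - J\<close>; the reverse excess is \<open>|J''|\<close>, attained at the end of \<open>I - J\<close>.\<close>

unbundle fps_syntax

interpretation fps_vs: vector_space "\<lambda>(c::complex) (f::complex fps). fps_const c * f"
  by unfold_locales (simp_all add: distrib_left distrib_right mult.assoc flip: fps_const_add fps_const_mult)

lemma Zlin_eq_mult: "h \<in> Zlin \<Longrightarrow> h r = r * h 1"
  unfolding Zlin_def by (metis (mono_tags, lifting) mem_Collect_eq mult_1_right)

lemma mult_in_Zlin: "(\<lambda>r. c * r) \<in> Zlin"
  unfolding Zlin_def by (simp add: distrib_left mult.left_commute)

lemma fps_X_power_inj: "fps_X ^ i = (fps_X ^ j :: complex fps) \<Longrightarrow> i = j"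
  by (metis fps_X_power_nth one_neq_zero)

lemma fps_X_powers_independent: "fps_vs.independent ((\<lambda>i. fps_X ^ i :: complex fps) ` S)"
  unfolding fps_vs.independent_explicit_finite_subsets
proof (intro allI impI ballI)
  fix T u v
  assume T: "T \<subseteq> (\<lambda>i. fps_X ^ i) ` S" "finite T"
    and comb: "(\<Sum>v\<in>T. fps_const (u v) * v) = (0 :: complex fps)" and v: "v \<in> T"
  then obtain i where v_eq: "v = fps_X ^ i" by auto
  have "0 = (\<Sum>w\<in>T. u w * w $ i)"
    using arg_cong[OF comb, of "\<lambda>f. f $ i"] by (simp add: fps_sum_nth)
  also have "\<dots> = u v * v $ i"
  proof (rule sum.remove[OF T(2) v, THEN trans], simp, rule sum.neutral, rule ballI)
    fix w assume "w \<in> T - {v}"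
    with T v_eq show "u w * w $ i = 0" by auto
  qed
  finally show "u v = 0" using v_eq by simp
qed

lemma fps_cutoff_lincomb:
  fixes f :: "'b \<Rightarrow> complex fps"
  shows "fps_cutoff d (\<Sum>b\<in>B. fps_const (c b) * f b) = (\<Sum>b\<in>B. fps_const (c b) * fps_cutoff d (f b))"
  by (simp add: fps_eq_iff fps_sum_nth)

lemma Zlin_spanned_modulo_X_power:
  assumes "h \<in> Zlin"
  shows "\<exists>q c. h = (\<lambda>r. fps_X ^ d * q * r +
            (\<Sum>b\<in>(\<lambda>i r. fps_X ^ i * r) ` {..<d}. fps_const (c b) * b r))"
proof -
  let ?F = "\<lambda>i (r :: complex fps). fps_X ^ i * r"
  have inj: "inj_on ?F {..<d}"
    by (rule inj_onI) (metis fps_X_power_inj mult_1_right)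
  \<comment> \<open>\<open>subdegree\<close> recovers \<open>i\<close> from the map \<open>?F i\<close>, so \<open>c (?F i)\<close> is the \<open>i\<close>-th coefficient of \<open>h 1\<close>.\<close>
  define c where "c b = h 1 $ subdegree (b 1)" for b :: "complex fps \<Rightarrow> complex fps"
  have "(\<Sum>b\<in>?F ` {..<d}. fps_const (c b) * b r) = (\<Sum>i<d. fps_const (h 1 $ i) * fps_X ^ i) * r" for r
    by (simp add: sum.reindex[OF inj] c_def sum_distrib_right mult.assoc)
  also have "(\<Sum>i<d. fps_const (h 1 $ i) * fps_X ^ i) = fps_cutoff d (h 1)"
    by (simp add: fps_eq_iff fps_sum_nth mult_delta_right)
  finally have low: "\<And>r. (\<Sum>b\<in>?F ` {..<d}. fps_const (c b) * b r) = fps_cutoff d (h 1) * r" .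
  have "h r = fps_X ^ d * fps_shift d (h 1) * r + fps_cutoff d (h 1) * r" for r
    using Zlin_eq_mult[OF assms, of r] fps_shift_cutoff'[of d "h 1"]
    by (metis distrib_right mult.commute)
  then show ?thesis unfolding low[symmetric] by blast
qed

lemma card_ge_if_spans_modulo_X_power:
  fixes B :: "(complex fps \<Rightarrow> complex fps) set"
  assumes B: "finite B" and W: "\<forall>w\<in>W. fps_X ^ d dvd w 1"
    and spans: "\<forall>h\<in>Zlin. \<exists>w\<in>W. \<exists>c :: (complex fps \<Rightarrow> complex fps) \<Rightarrow> complex.
                  h = (\<lambda>r. w r + (\<Sum>b\<in>B. fps_const (c b) * b r))"
  shows "d \<le> card B"
proof -
  \<comment> \<open>The \<open>\<complex>\<close>-linear map \<open>fps_cutoff d\<close> kills \<open>W\<close>, so the \<open>d\<close> independent \<open>X\<^sup>i\<close>, \<open>i < d\<close>,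
      lie in the span of the cutoffs of \<open>B\<close>.\<close>
  define T where "T = (\<lambda>b. fps_cutoff d (b 1)) ` B"
  have "fps_X ^ i \<in> fps_vs.span T" if "i < d" for i
  proof -
    obtain w c where "w \<in> W" and "(\<lambda>r. fps_X ^ i * r) = (\<lambda>r. w r + (\<Sum>b\<in>B. fps_const (c b) * b r))"
      using spans mult_in_Zlin by blast
    then have "fps_X ^ i = w 1 + (\<Sum>b\<in>B. fps_const (c b) * b 1)" and "fps_X ^ d dvd w 1"
      using W by (metis mult_1_right, blast)
    then have "fps_cutoff d (fps_X ^ i) = (\<Sum>b\<in>B. fps_const (c b) * fps_cutoff d (b 1))"
      by (auto simp: fps_cutoff_add fps_cutoff_lincomb fps_cutoff_zero_iff
          dest: dvd_imp_subdegree_le)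
    moreover have "fps_X ^ i = fps_cutoff d (fps_X ^ i :: complex fps)"
      using \<open>i < d\<close> by (simp add: fps_eq_iff)
    ultimately have "fps_X ^ i = (\<Sum>b\<in>B. fps_const (c b) * fps_cutoff d (b 1))"
      by simp
    also have "\<dots> \<in> fps_vs.span T"
      by (intro fps_vs.span_sum fps_vs.span_scale fps_vs.span_base) (auto simp: T_def)
    finally show ?thesis .
  qed
  then have "card ((\<lambda>i. fps_X ^ i :: complex fps) ` {..<d}) \<le> card T"
    using fps_vs.independent_span_bound[OF _ fps_X_powers_independent] B
    unfolding T_def by blast
  also have "\<dots> \<le> card B"
    unfolding T_def by (rule card_image_le[OF B])
  finally show ?thesis
    by (simp add: card_image inj_on_def fps_X_power_inj)
qed

lemma coker_dim_Zlin_X_power: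
  assumes "\<forall>w\<in>W. fps_X ^ d dvd w 1" and "\<forall>q. (\<lambda>r. fps_X ^ d * q * r) \<in> W"
  shows "coker_dim Zlin W = d"
  unfolding coker_dim_def
proof (rule Least_equality)
  let ?B = "(\<lambda>i r. fps_X ^ i * r :: complex fps) ` {..<d}"
  have "card ?B = d"
    by (subst card_image) (auto intro!: inj_onI fps_X_power_inj dest: fun_cong[of _ _ 1])
  moreover have "?B \<subseteq> Zlin"
    using mult_in_Zlin by auto
  moreover have "\<forall>h\<in>Zlin. \<exists>w\<in>W. \<exists>c. h = (\<lambda>r. w r + (\<Sum>b\<in>?B. fps_const (c b) * b r))"
    using Zlin_spanned_modulo_X_power assms(2) by blast
  ultimately show "\<exists>B \<subseteq> Zlin. finite B \<and> card B = d \<and>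
      (\<forall>h\<in>Zlin. \<exists>w\<in>W. \<exists>c. h = (\<lambda>r. w r + (\<Sum>b\<in>B. fps_const (c b) * b r)))"
    by blast
qed (use card_ge_if_spans_modulo_X_power assms(1) in blast)

lemma arrow_relations_iff:
  "(xact I a * c' = xact J a * c \<and> yact I a * c = yact J a * c') \<longleftrightarrow>
   c' * fps_X ^ of_bool (a \<in> J - I) = c * fps_X ^ of_bool (a \<in> I - J)"
  by (cases "a \<in> I"; cases "a \<in> J") (auto simp: xact_def yact_def mult.commute)

lemma HomA_iff:
  "h \<in> HomA n I J \<longleftrightarrow> (\<forall>j<n. h j \<in> Zlin) \<and>
     (\<forall>a\<in>{1..n}. h (a mod n) 1 * fps_X ^ of_bool (a \<in> J - I) =
                  h (a - 1) 1 * fps_X ^ of_bool (a \<in> I - J))"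
proof -
  have arrow: "(\<forall>r. h (a mod n) (xact I a * r) = xact J a * h (a - 1) r \<and>
                   h (a - 1) (yact I a * r) = yact J a * h (a mod n) r) \<longleftrightarrow>
      h (a mod n) 1 * fps_X ^ of_bool (a \<in> J - I) = h (a - 1) 1 * fps_X ^ of_bool (a \<in> I - J)"
    if Zlin: "\<forall>j<n. h j \<in> Zlin" and a: "a \<in> {1..n}" for a
  proof -
    define c c' where "c = h (a - 1) 1" and "c' = h (a mod n) 1"
    have "h (a - 1) = (\<lambda>r. r * c)" "h (a mod n) = (\<lambda>r. r * c')"
      using Zlin a by (auto simp: c_def c'_def intro!: ext Zlin_eq_mult)
    then have "(\<forall>r. h (a mod n) (xact I a * r) = xact J a * h (a - 1) r \<and>
                   h (a - 1) (yact I a * r) = yact J a * h (a mod n) r) \<longleftrightarrow>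
        (\<forall>r. r * (xact I a * c') = r * (xact J a * c) \<and> r * (yact I a * c) = r * (yact J a * c'))"
      by (simp add: mult_ac)
    also have "\<dots> \<longleftrightarrow> xact I a * c' = xact J a * c \<and> yact I a * c = yact J a * c'"
      by (intro iffI allI) (auto dest: spec[where x = 1])
    finally show ?thesis
      by (simp only: arrow_relations_iff c_def c'_def)
  qed
  show ?thesis
  proof (cases "\<forall>j<n. h j \<in> Zlin")
    case True
    then show ?thesis
      unfolding HomA_def tgt_def src_def mem_Collect_eq using arrow[OF True] by blast
  qed (auto simp: HomA_def)
qed

definition card_upto :: "nat set \<Rightarrow> nat \<Rightarrow> nat" where
  "card_upto S a = card (S \<inter> {1..a})"

lemma card_upto_0 [simp]: "card_upto S 0 = 0"
  by (simp add: card_upto_def)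

lemma card_upto_Suc: "card_upto S (Suc a) = card_upto S a + of_bool (Suc a \<in> S)"
proof -
  have "S \<inter> {1..Suc a} = (if Suc a \<in> S then insert (Suc a) (S \<inter> {1..a}) else S \<inter> {1..a})"
    by (auto simp: le_Suc_eq)
  then show ?thesis
    by (simp add: card_upto_def)
qed

lemma card_upto_le_card: "finite S \<Longrightarrow> card_upto S a \<le> card S"
  by (simp add: card_upto_def card_mono)

lemma card_upto_eq_card: "S \<subseteq> {1..a} \<Longrightarrow> card_upto S a = card S"
  by (simp add: card_upto_def Int_absorb2)

lemma card_upto_eq_0: "\<forall>x\<in>S. a < x \<Longrightarrow> card_upto S a = 0"
  unfolding card_upto_def by (metis atLeastAtMost_iff card.empty disjoint_iff not_le)

lemma card_upto_Un:
  "finite A \<Longrightarrow> finite B \<Longrightarrow> A \<inter> B = {} \<Longrightarrow> card_upto (A \<union> B) a = card_upto A a + card_upto B a"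
  unfolding card_upto_def by (simp add: Int_Un_distrib2 card_Un_disjoint disjoint_iff)

lemma HomA_chain:
  assumes h: "h \<in> HomA n I J" and "a \<le> n"
  shows "h 0 1 * fps_X ^ card_upto (I - J) a = h (a mod n) 1 * fps_X ^ card_upto (J - I) a"
  using \<open>a \<le> n\<close>
proof (induction a)
  case (Suc b)
  then have b: "b < n" "b mod n = b" by simp_all
  have "\<forall>a\<in>{1..n}. h (a mod n) 1 * fps_X ^ of_bool (a \<in> J - I) =
                        h (a - 1) 1 * fps_X ^ of_bool (a \<in> I - J)"
    using h unfolding HomA_iff by blast
  from this[rule_format, of "Suc b"] b have rel:
    "h (Suc b mod n) 1 * fps_X ^ of_bool (Suc b \<in> J - I) = h b 1 * fps_X ^ of_bool (Suc b \<in> I - J)"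
    by simp
  have IH: "h 0 1 * fps_X ^ card_upto (I - J) b = h b 1 * fps_X ^ card_upto (J - I) b"
    using Suc b by simp
  have "h 0 1 * fps_X ^ card_upto (I - J) (Suc b) =
        h 0 1 * fps_X ^ card_upto (I - J) b * fps_X ^ of_bool (Suc b \<in> I - J)"
    by (simp add: card_upto_Suc power_add mult.assoc)
  also have "\<dots> = fps_X ^ card_upto (J - I) b * (h b 1 * fps_X ^ of_bool (Suc b \<in> I - J))"
    unfolding IH by (simp only: mult_ac)
  also have "\<dots> = fps_X ^ card_upto (J - I) b * (h (Suc b mod n) 1 * fps_X ^ of_bool (Suc b \<in> J - I))"
    by (simp only: rel)
  also have "\<dots> = h (Suc b mod n) 1 * fps_X ^ card_upto (J - I) (Suc b)"
    by (simp only: card_upto_Suc power_add mult_ac)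
  finally show ?case .
qed simp

lemma HomA_restriction_dvd:
  assumes h: "h \<in> HomA n I J" and "a \<le> n"
  shows "fps_X ^ (card_upto (J - I) a - card_upto (I - J) a) dvd h 0 1"
proof (cases "card_upto (J - I) a \<le> card_upto (I - J) a")
  case False
  define k e where "k = card_upto (I - J) a" and "e = card_upto (J - I) a - card_upto (I - J) a"
  then have "card_upto (J - I) a = e + k"
    using False by simp
  then have "h 0 1 * fps_X ^ k = (h (a mod n) 1 * fps_X ^ e) * fps_X ^ k"
    using HomA_chain[OF assms] by (simp add: k_def power_add mult.assoc)
  then have "h 0 1 = h (a mod n) 1 * fps_X ^ e"
    by simp
  then show ?thesis
    by (simp add: e_def)
qed simp

lemma X_power_multiple_in_restriction_HomA:
  assumes IJ: "I \<subseteq> {1..n}" "J \<subseteq> {1..n}" "card (I - J) = card (J - I)"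
    and bound: "\<forall>a\<le>n. card_upto (J - I) a \<le> d + card_upto (I - J) a"
  shows "(\<lambda>r. fps_X ^ d * q * r) \<in> (\<lambda>h. h 0) ` HomA n I J"
proof -
  \<comment> \<open>The exponents forced by \<open>HomA_chain\<close> when \<open>h 0\<close> is multiplication by \<open>X\<^sup>d q\<close>;
      \<open>bound\<close> makes the truncated subtraction exact.\<close>
  define E where "E a = d + card_upto (I - J) a - card_upto (J - I) a" for a
  define h where "h j r = fps_X ^ E j * q * r" for j r
  have "card_upto (I - J) n = card_upto (J - I) n"
    using IJ by (subst (1 2) card_upto_eq_card) auto
  then have "E n = E 0"
    by (simp add: E_def)
  then have E_mod: "E (a mod n) = E a" if "a \<in> {1..n}" for a
    using that by (cases "a = n") auto
  have E_step: "E a + of_bool (a \<in> J - I) = E (a - 1) + of_bool (a \<in> I - J)"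
    if a: "a \<in> {1..n}" for a
  proof -
    obtain b where "a = Suc b" "b < n"
      using a by (cases a) auto
    then show ?thesis
      using bound[rule_format, of a] bound[rule_format, of b]
      by (simp add: E_def card_upto_Suc)
  qed
  have "h \<in> HomA n I J"
    unfolding HomA_iff
  proof (intro conjI allI impI ballI)
    show "h j \<in> Zlin" for j
      unfolding h_def by (rule mult_in_Zlin)
    fix a assume a: "a \<in> {1..n}"
    have "h (a mod n) 1 * fps_X ^ of_bool (a \<in> J - I) = fps_X ^ (E a + of_bool (a \<in> J - I)) * q"
      by (simp add: h_def E_mod[OF a] power_add mult_ac)
    also have "\<dots> = h (a - 1) 1 * fps_X ^ of_bool (a \<in> I - J)"
      by (simp only: E_step[OF a]) (simp add: h_def power_add mult_ac)
    finally show "h (a mod n) 1 * fps_X ^ of_bool (a \<in> J - I) = h (a - 1) 1 * fps_X ^ of_bool (a \<in> I - J)" .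
  qed
  moreover have "h 0 = (\<lambda>r. fps_X ^ d * q * r)"
    by (simp add: h_def E_def fun_eq_iff)
  ultimately show ?thesis
    by (metis image_eqI)
qed

lemma card_Diff_commute:
  "finite I \<Longrightarrow> finite J \<Longrightarrow> card I = card J \<Longrightarrow> card (I - J) = card (J - I)"
  by (simp add: card_Diff_subset_Int Int_commute)

theorem kappa0_eq_Max_excess:
  assumes I: "I \<subseteq> {1..n}" and J: "J \<subseteq> {1..n}" and card: "card I = card J"
  shows "kappa0 n I J = (MAX a\<in>{..n}. card_upto (J - I) a - card_upto (I - J) a)"
    (is "_ = ?d")
proof -
  have "finite I" "finite J"
    using I J finite_subset by blast+
  then have card_diff: "card (I - J) = card (J - I)"
    using card by (rule card_Diff_commute)
  have "?d \<in> (\<lambda>a. card_upto (J - I) a - card_upto (I - J) a) ` {..n}"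
    by (rule Max_in) auto
  then obtain a where "a \<le> n" and d_eq: "?d = card_upto (J - I) a - card_upto (I - J) a"
    by blast
  have "card_upto (J - I) a - card_upto (I - J) a \<le> ?d" if "a \<le> n" for a
    by (rule Max_ge) (use that in auto)
  then have "\<forall>a\<le>n. card_upto (J - I) a \<le> ?d + card_upto (I - J) a"
    by (simp add: le_diff_conv)
  then show ?thesis
    unfolding kappa0_def
    using HomA_restriction_dvd[OF _ \<open>a \<le> n\<close>] X_power_multiple_in_restriction_HomA[OF I J card_diff]
    by (intro coker_dim_Zlin_X_power) (auto simp: d_eq)
qed

lemma exists_threshold_between:
  fixes A B :: "nat set"
  assumes "A \<subseteq> {1..n}" "B \<subseteq> {1..n}" "\<forall>x\<in>A. \<forall>y\<in>B. x < y"
  shows "\<exists>a\<le>n. A \<subseteq> {1..a} \<and> (\<forall>y\<in>B. a < y)"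
proof (cases "A = {}")
  case True
  then show ?thesis
    using assms(2) by (intro exI[of _ 0]) auto
next
  case False
  have "finite A"
    using assms(1) finite_subset by blast
  then show ?thesis
    using False assms Max_in[of A] Max_ge[of A] by (intro exI[of _ "Max A"]) fastforce
qed

context
  fixes n :: nat and K J' J'' :: "nat set"
  assumes subsets: "K \<subseteq> {1..n}" "J' \<subseteq> {1..n}" "J'' \<subseteq> {1..n}"
    and disjoint: "J' \<inter> J'' = {}"
    and card_K: "card K = card J' + card J''"
    and J'_less_K: "\<forall>x\<in>J'. \<forall>y\<in>K. x < y"
    and K_less_J'': "\<forall>x\<in>K. \<forall>y\<in>J''. x < y"
begin

private lemma finite_parts: "finite K" "finite J'" "finite J''"
  using subsets finite_subset by blast+

private lemma J'_less_J'': "\<forall>x\<in>J'. \<forall>y\<in>J''. x < y"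
proof (intro ballI)
  fix x y assume "x \<in> J'" "y \<in> J''"
  then have "card K > 0"
    using card_K finite_parts(3) card_gt_0_iff by fastforce
  then obtain k where "k \<in> K"
    unfolding card_gt_0_iff by blast
  then show "x < y"
    using J'_less_K K_less_J'' \<open>x \<in> J'\<close> \<open>y \<in> J''\<close> less_trans by blast
qed

private lemma card_upto_parts: "card_upto (J' \<union> J'') a = card_upto J' a + card_upto J'' a"
  using finite_parts disjoint by (intro card_upto_Un)

lemma Max_excess_before_separator:
  "(MAX a\<in>{..n}. card_upto (J' \<union> J'') a - card_upto K a) = card J'"
proof (rule Max_eqI)
  fix v assume "v \<in> (\<lambda>a. card_upto (J' \<union> J'') a - card_upto K a) ` {..n}"
  then obtain a where v: "v = card_upto (J' \<union> J'') a - card_upto K a"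
    by blast
  show "v \<le> card J'"
  proof (cases "\<forall>y\<in>J''. a < y")
    case True
    then show ?thesis
      using v card_upto_parts[of a] card_upto_eq_0[OF True] card_upto_le_card[OF finite_parts(2), of a]
      by linarith
  next
    case False
    then obtain y where "y \<in> J''" "y \<le> a"
      by auto
    then have "K \<subseteq> {1..a}"
      using subsets(1) K_less_J'' by fastforce
    then have "card_upto K a = card J' + card J''"
      using card_K by (simp add: card_upto_eq_card)
    then show ?thesis
      using v card_upto_parts[of a] card_upto_le_card[OF finite_parts(2), of a]
        card_upto_le_card[OF finite_parts(3), of a]
      by linarith
  qed
next
  obtain a where "a \<le> n" and J': "J' \<subseteq> {1..a}" and K_J'': "\<forall>y\<in>K \<union> J''. a < y"
    using exists_threshold_between[of J' n "K \<union> J''"] subsets J'_less_K J'_less_J'' by blast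
  have "card_upto K a = 0" "card_upto J'' a = 0"
    using K_J'' by (simp_all add: card_upto_eq_0)
  then have "card_upto (J' \<union> J'') a - card_upto K a = card J'"
    using card_upto_eq_card[OF J'] card_upto_parts[of a] by linarith
  with \<open>a \<le> n\<close> show "card J' \<in> (\<lambda>a. card_upto (J' \<union> J'') a - card_upto K a) ` {..n}"
    by (intro image_eqI[where x = a]) auto
qed simp

lemma Max_excess_after_separator:
  "(MAX a\<in>{..n}. card_upto K a - card_upto (J' \<union> J'') a) = card J''"
proof (rule Max_eqI)
  fix v assume "v \<in> (\<lambda>a. card_upto K a - card_upto (J' \<union> J'') a) ` {..n}"
  then obtain a where v: "v = card_upto K a - card_upto (J' \<union> J'') a"
    by blast
  show "v \<le> card J''"
  proof (cases "\<forall>x\<in>K. a < x")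
    case True
    then show ?thesis
      using v card_upto_eq_0[OF True] by simp
  next
    case False
    then obtain x where "x \<in> K" "x \<le> a"
      by auto
    then have "J' \<subseteq> {1..a}"
      using subsets(2) J'_less_K by fastforce
    then have "card_upto J' a = card J'"
      by (rule card_upto_eq_card)
    then show ?thesis
      using v card_upto_parts[of a] card_upto_le_card[OF finite_parts(1), of a] card_K by linarith
  qed
next
  obtain a where "a \<le> n" and J'_K: "J' \<union> K \<subseteq> {1..a}" and J'': "\<forall>y\<in>J''. a < y"
    using exists_threshold_between[of "J' \<union> K" n J''] subsets K_less_J'' J'_less_J'' by blast
  have "card_upto J' a = card J'" "card_upto K a = card K"
    using J'_K by (simp_all add: card_upto_eq_card)
  then have "card_upto K a - card_upto (J' \<union> J'') a = card J''"
    using card_upto_eq_0[OF J''] card_K card_upto_parts[of a] by linarith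
  with \<open>a \<le> n\<close> show "card J'' \<in> (\<lambda>a. card_upto K a - card_upto (J' \<union> J'') a) ` {..n}"
    by (intro image_eqI[where x = a]) auto
qed simp

end

theorem lemma6p4:
  fixes m n :: nat and I J J' J'' :: "nat set"
  assumes "1 \<le> m" and "m < n"
    and "I \<subseteq> {1..n}" and "card I = m"
    and "J \<subseteq> {1..n}" and "card J = m"
    and "J - I = J' \<union> J''" and "J' \<inter> J'' = {}"
    and "\<forall>x\<in>J'. \<forall>y\<in>I - J. x < y"
    and "\<forall>x\<in>I - J. \<forall>y\<in>J''. x < y"
  shows "kappa0 n I J = card J' \<and> kappa0 n J I = card J''"
proof -
  have "finite I" "finite J"
    using assms(3,5) finite_subset by blast+
  have "finite J'" "finite J''"
    using \<open>finite J\<close> finite_subset[of J' J] finite_subset[of J'' J] assms(7) by blast+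
  have card_eq: "card I = card J"
    using assms(4,6) by simp
  with \<open>finite I\<close> \<open>finite J\<close> have "card (I - J) = card (J - I)"
    by (rule card_Diff_commute)
  also have "\<dots> = card J' + card J''"
    using assms(7,8) \<open>finite J'\<close> \<open>finite J''\<close> by (simp add: card_Un_disjoint)
  finally have card_K: "card (I - J) = card J' + card J''" .
  have "I - J \<subseteq> {1..n}" "J' \<subseteq> {1..n}" "J'' \<subseteq> {1..n}"
    using assms(3,5,7) by auto
  note separated = this assms(8) card_K assms(9,10)
  show ?thesis
    using kappa0_eq_Max_excess[OF assms(3,5) card_eq] kappa0_eq_Max_excess[OF assms(5,3) card_eq[symmetric]]
      Max_excess_before_separator[OF separated] Max_excess_after_separator[OF separated]
    unfolding assms(7) by simp
qed

end
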